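(* Assume the Jacobi parameters of $\rho$ satisfy $0<\inf_n a_n\le\sup_n a_n<\infty$, and let $x_0\in\mathbb{R}$. Then the following three conditions are equivalent: (a) $\rho$ satisfies the Nevai condition at $x_0$; (b) $\int (x-x_0)^2\,d\eta_n^{(x_0)}(x)\to0$ as $n\to\infty$; (c) $\displaystyle \lim_{n\to\infty}\frac{p_n(x_0)^2}{\sum_{j=0}^n p_j(x_0)^2}=0$.
   Context: Let $\rho$ be a probability measure on $\mathbb{R}$ with compact but infinite support, $p_n$ ($n\ge0$) its orthonormal polynomials (real coefficients, positive leading coefficient, $p_0=1$), and $\{a_n,b_n\}_{n\ge1}$ ($a_n>0$, $b_n\in\mathbb{R}$) its Jacobi parameters, defined by $xp_n(x)=a_{n+1}p_{n+1}(x)+b_{n+1}p_n(x)+a_np_{n-1}(x)$ with $p_{-1}=0$. Set $K_n(x,y)=\sum_{j=0}^n p_j(x)p_j(y)$. For $x_0\in\mathbb{R}$ let $\eta_n^{(x_0)}$ be the probability measure $d\eta_n^{(x_0)}(x)=K_n(x,x_0)^2\,d\rho(x)/K_n(x_0,x_0)$. We say $\rho$ satisfies the Nevai condition at $x_0$ if $\eta_n^{(x_0)}\to\delta_{x_0}$ weakly as $n\to\infty$. *)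

theory Defs
  imports "HOL-Probability.Probability" "HOL-Computational_Algebra.Polynomial"
begin

definition msupport :: "real measure \<Rightarrow> real set" where
  "msupport \<rho> = {x. \<forall>e>0. measure \<rho> (ball x e) > 0}"

definition admissible_measure :: "real measure \<Rightarrow> bool" where
  "admissible_measure \<rho> \<longleftrightarrow> prob_space \<rho> \<and> sets \<rho> = sets borel \<and>
     compact (msupport \<rho>) \<and> infinite (msupport \<rho>)"

definition orthonormal_polys :: "real measure \<Rightarrow> (nat \<Rightarrow> real poly) \<Rightarrow> bool" where
  "orthonormal_polys \<rho> p \<longleftrightarrow>
     (\<forall>n. degree (p n) = n \<and> lead_coeff (p n) > 0) \<and>
     (\<forall>m n. (\<lambda>x. poly (p m) x * poly (p n) x) \<in> borel_measurable \<rho> \<and>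
            integrable \<rho> (\<lambda>x. poly (p m) x * poly (p n) x) \<and>
            integral\<^sup>L \<rho> (\<lambda>x. poly (p m) x * poly (p n) x) = (if m = n then 1 else 0))"

text \<open>a, b are the Jacobi parameters (indexed from 1) of p:
  x p_n = a_{n+1} p_{n+1} + b_{n+1} p_n + a_n p_{n-1}, p_{-1} = 0, a_n > 0.\<close>
definition jacobi_params :: "(nat \<Rightarrow> real poly) \<Rightarrow> (nat \<Rightarrow> real) \<Rightarrow> (nat \<Rightarrow> real) \<Rightarrow> bool" where
  "jacobi_params p a b \<longleftrightarrow> (\<forall>n\<ge>1. a n > 0) \<and>
     (\<forall>n x. x * poly (p n) x = a (n+1) * poly (p (n+1)) x + b (n+1) * poly (p n) x
              + (if n = 0 then 0 else a n * poly (p (n-1)) x))"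

definition CD_kernel :: "(nat \<Rightarrow> real poly) \<Rightarrow> nat \<Rightarrow> real \<Rightarrow> real \<Rightarrow> real" where
  "CD_kernel p n x y = (\<Sum>j\<le>n. poly (p j) x * poly (p j) y)"

definition eta :: "real measure \<Rightarrow> (nat \<Rightarrow> real poly) \<Rightarrow> real \<Rightarrow> nat \<Rightarrow> real measure" where
  "eta \<rho> p x0 n = density \<rho> (\<lambda>x. ennreal ((CD_kernel p n x x0)\<^sup>2 / CD_kernel p n x0 x0))"

definition weak_conv_to :: "(nat \<Rightarrow> real measure) \<Rightarrow> real measure \<Rightarrow> bool" where
  "weak_conv_to \<mu> \<nu> \<longleftrightarrow> (\<forall>f :: real \<Rightarrow> real. continuous_on UNIV f \<and> bounded (range f) \<longrightarrow>
       (\<lambda>n. integral\<^sup>L (\<mu> n) f) \<longlonglongrightarrow> integral\<^sup>L \<nu> f)"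

definition nevai_condition :: "real measure \<Rightarrow> (nat \<Rightarrow> real poly) \<Rightarrow> real \<Rightarrow> bool" where
  "nevai_condition \<rho> p x0 \<longleftrightarrow> weak_conv_to (eta \<rho> p x0) (return borel x0)"

end

theory Submission imports Defs begin

(* Proof outline.  Write K_n(x,y) for the Christoffel-Darboux kernel and
   eta_n = K_n(x,x0)^2 / K_n(x0,x0) d rho.

   (b) <-> (c): The three-term recurrence yields the Christoffel-Darboux formula
   (x - y) K_n(x,y) = a_(n+1) (p_(n+1)(x) p_n(y) - p_n(x) p_(n+1)(y)); squaring it
   and integrating with orthonormality gives the exact second moment
     int (x - x0)^2 d eta_n = a_(n+1)^2 (p_n(x0)^2 + p_(n+1)(x0)^2) / K_n(x0,x0).
   Since a_(n+1) stays in [c, C], an elementary lemma on ratios of a nonnegative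
   sequence to its partial sums shows that this tends to 0 iff p_n(x0)^2 / K_n(x0,x0) does.

   (a) <-> (b): This holds for any sequence of probability measures on R concentrated
   on a common bounded set: a continuous bounded f satisfies
   |f x - f x0| <= eps + B (x - x0)^2, so a vanishing second moment forces weak
   convergence to the Dirac measure at x0; conversely, testing weak convergence against
   the truncation min ((x - x0)^2, R^2) recovers the second moment.  The measures eta_n
   are concentrated on the compact support of rho. *)

lemma jacobi_recurrence:
  assumes "jacobi_params p a b"
  shows "x * poly (p n) x = a (n+1) * poly (p (n+1)) x + b (n+1) * poly (p n) x
              + (if n = 0 then 0 else a n * poly (p (n-1)) x)"
  using assms unfolding jacobi_params_def by blast

lemma christoffel_darboux:
  assumes "jacobi_params p a b"
  shows "(x - y) * CD_kernel p n x y =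
    a (n+1) * (poly (p (n+1)) x * poly (p n) y - poly (p n) x * poly (p (n+1)) y)"
proof (induction n)
  case 0
  have "(x - y) * CD_kernel p 0 x y = (x * poly (p 0) x) * poly (p 0) y - (y * poly (p 0) y) * poly (p 0) x"
    by (simp add: CD_kernel_def algebra_simps)
  then show ?case
    using jacobi_recurrence[OF assms, of x 0] jacobi_recurrence[OF assms, of y 0]
    by (simp add: algebra_simps)
next
  case (Suc n)
  have "(x - y) * CD_kernel p (Suc n) x y = (x - y) * CD_kernel p n x y
      + (x * poly (p (Suc n)) x) * poly (p (Suc n)) y - (y * poly (p (Suc n)) y) * poly (p (Suc n)) x"
    by (simp add: CD_kernel_def algebra_simps)
  then show ?case
    using Suc jacobi_recurrence[OF assms, of x "Suc n"] jacobi_recurrence[OF assms, of y "Suc n"]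
    by (simp add: algebra_simps)
qed

lemma orthonormal_integrable:
  assumes "orthonormal_polys \<rho> p"
  shows "integrable \<rho> (\<lambda>x. poly (p i) x * poly (p j) x)"
  using assms unfolding orthonormal_polys_def by blast

lemma orthonormal_integral:
  assumes "orthonormal_polys \<rho> p"
  shows "integral\<^sup>L \<rho> (\<lambda>x. poly (p i) x * poly (p j) x) = (if i = j then 1 else 0)"
  using assms unfolding orthonormal_polys_def by blast

lemma orthonormal_square_of_combination:
  assumes "orthonormal_polys \<rho> p" "i \<noteq> j"
  shows "integrable \<rho> (\<lambda>x. (\<alpha> * poly (p i) x + \<beta> * poly (p j) x)\<^sup>2)"
    "integral\<^sup>L \<rho> (\<lambda>x. (\<alpha> * poly (p i) x + \<beta> * poly (p j) x)\<^sup>2) = \<alpha>\<^sup>2 + \<beta>\<^sup>2"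
proof -
  have eq: "(\<lambda>x. (\<alpha> * poly (p i) x + \<beta> * poly (p j) x)\<^sup>2) = (\<lambda>x.
      \<alpha>\<^sup>2 * (poly (p i) x * poly (p i) x) + 2 * \<alpha> * \<beta> * (poly (p i) x * poly (p j) x)
      + \<beta>\<^sup>2 * (poly (p j) x * poly (p j) x))"
    by (simp add: power2_eq_square algebra_simps)
  show "integrable \<rho> (\<lambda>x. (\<alpha> * poly (p i) x + \<beta> * poly (p j) x)\<^sup>2)"
    unfolding eq by (simp add: orthonormal_integrable[OF assms(1)])
  show "integral\<^sup>L \<rho> (\<lambda>x. (\<alpha> * poly (p i) x + \<beta> * poly (p j) x)\<^sup>2) = \<alpha>\<^sup>2 + \<beta>\<^sup>2"
    unfolding eq using assms(2)
    by (simp add: orthonormal_integrable[OF assms(1)] orthonormal_integral[OF assms(1)])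
qed

lemma kernel_square_integral:
  assumes "orthonormal_polys \<rho> p"
  shows "integrable \<rho> (\<lambda>x. (CD_kernel p n x y)\<^sup>2)"
    "integral\<^sup>L \<rho> (\<lambda>x. (CD_kernel p n x y)\<^sup>2) = CD_kernel p n y y"
proof -
  have eq: "(\<lambda>x. (CD_kernel p n x y)\<^sup>2) = (\<lambda>x. \<Sum>i\<le>n. \<Sum>j\<le>n.
      (poly (p i) y * poly (p j) y) * (poly (p i) x * poly (p j) x))"
    by (simp add: CD_kernel_def power2_eq_square sum_product mult_ac)
  show "integrable \<rho> (\<lambda>x. (CD_kernel p n x y)\<^sup>2)"
    unfolding eq by (simp add: orthonormal_integrable[OF assms])
  show "integral\<^sup>L \<rho> (\<lambda>x. (CD_kernel p n x y)\<^sup>2) = CD_kernel p n y y"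
    unfolding eq
    by (simp add: orthonormal_integrable[OF assms] orthonormal_integral[OF assms]
        CD_kernel_def if_distrib sum.delta cong: if_cong)
qed

lemma kernel_moment_integral:
  assumes "orthonormal_polys \<rho> p" "jacobi_params p a b"
  shows "integrable \<rho> (\<lambda>x. (x - y)\<^sup>2 * (CD_kernel p n x y)\<^sup>2)"
    "integral\<^sup>L \<rho> (\<lambda>x. (x - y)\<^sup>2 * (CD_kernel p n x y)\<^sup>2)
       = (a (n+1))\<^sup>2 * ((poly (p n) y)\<^sup>2 + (poly (p (n+1)) y)\<^sup>2)"
proof -
  have eq: "(\<lambda>x. (x - y)\<^sup>2 * (CD_kernel p n x y)\<^sup>2) = (\<lambda>x.
      (a (n+1) * poly (p n) y * poly (p (n+1)) x + (- a (n+1) * poly (p (n+1)) y) * poly (p n) x)\<^sup>2)"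
  proof
    fix x
    have "(x - y)\<^sup>2 * (CD_kernel p n x y)\<^sup>2 = ((x - y) * CD_kernel p n x y)\<^sup>2"
      by (simp add: power_mult_distrib)
    also have "\<dots> = (a (n+1) * (poly (p (n+1)) x * poly (p n) y - poly (p n) x * poly (p (n+1)) y))\<^sup>2"
      by (simp only: christoffel_darboux[OF assms(2)])
    finally show "(x - y)\<^sup>2 * (CD_kernel p n x y)\<^sup>2 =
      (a (n+1) * poly (p n) y * poly (p (n+1)) x + (- a (n+1) * poly (p (n+1)) y) * poly (p n) x)\<^sup>2"
      by (simp add: algebra_simps)
  qed
  show "integrable \<rho> (\<lambda>x. (x - y)\<^sup>2 * (CD_kernel p n x y)\<^sup>2)"
    unfolding eq by (rule orthonormal_square_of_combination(1)[OF assms(1)]) simp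
  show "integral\<^sup>L \<rho> (\<lambda>x. (x - y)\<^sup>2 * (CD_kernel p n x y)\<^sup>2)
       = (a (n+1))\<^sup>2 * ((poly (p n) y)\<^sup>2 + (poly (p (n+1)) y)\<^sup>2)"
    unfolding eq by (subst orthonormal_square_of_combination(2)[OF assms(1)])
      (simp_all add: power_mult_distrib algebra_simps)
qed

lemma CD_kernel_diagonal: "CD_kernel p n y y = (\<Sum>j\<le>n. (poly (p j) y)\<^sup>2)"
  unfolding CD_kernel_def by (simp add: power2_eq_square)

lemma orthonormal_first_poly_pos:
  assumes "orthonormal_polys \<rho> p"
  shows "0 < poly (p 0) y"
proof -
  have "degree (p 0) = 0" and lead: "lead_coeff (p 0) > 0"
    using assms unfolding orthonormal_polys_def by blast+
  then obtain c where "p 0 = [:c:]" using degree0_coeffs by blast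
  then show ?thesis using lead by simp
qed

lemma CD_kernel_diagonal_pos:
  assumes "orthonormal_polys \<rho> p"
  shows "0 < CD_kernel p n y y"
proof -
  have "(poly (p 0) y)\<^sup>2 \<le> CD_kernel p n y y"
    unfolding CD_kernel_diagonal by (rule member_le_sum) auto
  moreover have "0 < (poly (p 0) y)\<^sup>2"
    using orthonormal_first_poly_pos[OF assms, of y] by simp
  ultimately show ?thesis by linarith
qed

definition eta_weight :: "(nat \<Rightarrow> real poly) \<Rightarrow> real \<Rightarrow> nat \<Rightarrow> real \<Rightarrow> real" where
  "eta_weight p x0 n x = (CD_kernel p n x x0)\<^sup>2 / CD_kernel p n x0 x0"

lemma eta_as_density: "eta \<rho> p x0 n = density \<rho> (\<lambda>x. ennreal (eta_weight p x0 n x))"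
  unfolding eta_def eta_weight_def ..

lemma sets_eta: "sets (eta \<rho> p x0 n) = sets \<rho>"
  by (simp add: eta_def)

lemma eta_weight_nonneg: "0 \<le> eta_weight p x0 n x"
  unfolding eta_weight_def CD_kernel_diagonal by (simp add: sum_nonneg)

lemma eta_weight_measurable:
  assumes "sets \<rho> = sets borel"
  shows "eta_weight p x0 n \<in> borel_measurable \<rho>"
  unfolding measurable_cong_sets[OF assms refl] eta_weight_def[abs_def] CD_kernel_def divide_inverse
  by (intro borel_measurable_continuous_onI continuous_intros)

lemma eta_integral:
  assumes "sets \<rho> = sets borel" "f \<in> borel_measurable borel"
  shows "integral\<^sup>L (eta \<rho> p x0 n) f = integral\<^sup>L \<rho> (\<lambda>x. eta_weight p x0 n x * f x)"
  unfolding eta_as_density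
  using assms eta_weight_measurable[OF assms(1)] eta_weight_nonneg
  by (subst integral_density) (auto simp: measurable_cong_sets[OF assms(1) refl])

lemma eta_integrable:
  assumes "sets \<rho> = sets borel" "f \<in> borel_measurable borel"
  shows "integrable (eta \<rho> p x0 n) f \<longleftrightarrow> integrable \<rho> (\<lambda>x. eta_weight p x0 n x * f x)"
  unfolding eta_as_density
  using assms eta_weight_measurable[OF assms(1)] eta_weight_nonneg
  by (subst integrable_density) (auto simp: measurable_cong_sets[OF assms(1) refl])

(* eta_n is a probability measure, by the reproducing property. *)
lemma eta_prob_space:
  assumes "orthonormal_polys \<rho> p" "sets \<rho> = sets borel"
  shows "prob_space (eta \<rho> p x0 n)"
proof
  have "integrable \<rho> (eta_weight p x0 n)" "integral\<^sup>L \<rho> (eta_weight p x0 n) = 1"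
    using kernel_square_integral[OF assms(1), of n x0] CD_kernel_diagonal_pos[OF assms(1), of n x0]
    by (simp_all add: eta_weight_def[abs_def])
  then have "(\<integral>\<^sup>+x. ennreal (eta_weight p x0 n x) \<partial>\<rho>) = 1"
    by (subst nn_integral_eq_integral) (simp_all add: eta_weight_nonneg)
  then show "emeasure (eta \<rho> p x0 n) (space (eta \<rho> p x0 n)) = 1"
    unfolding eta_as_density
    using eta_weight_measurable[OF assms(2)] by (subst emeasure_density) auto
qed

lemma AE_eta:
  assumes "sets \<rho> = sets borel" "AE x in \<rho>. P x"
  shows "AE x in eta \<rho> p x0 n. P x"
  unfolding eta_as_density
  using eta_weight_measurable[OF assms(1)] assms(2) by (subst AE_density) auto

lemma eta_second_moment:
  assumes "orthonormal_polys \<rho> p" "jacobi_params p a b" "sets \<rho> = sets borel"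
  shows "integrable (eta \<rho> p x0 n) (\<lambda>x. (x - x0)\<^sup>2)"
    "integral\<^sup>L (eta \<rho> p x0 n) (\<lambda>x. (x - x0)\<^sup>2)
       = (a (n+1))\<^sup>2 * ((poly (p n) x0)\<^sup>2 + (poly (p (n+1)) x0)\<^sup>2) / (\<Sum>j\<le>n. (poly (p j) x0)\<^sup>2)"
proof -
  have weighted: "(\<lambda>x. eta_weight p x0 n x * (x - x0)\<^sup>2)
      = (\<lambda>x. (x - x0)\<^sup>2 * (CD_kernel p n x x0)\<^sup>2 / CD_kernel p n x0 x0)"
    unfolding eta_weight_def by (simp add: field_simps)
  have square_measurable: "(\<lambda>x. (x - x0)\<^sup>2) \<in> borel_measurable borel"
    by (intro borel_measurable_continuous_onI continuous_intros)
  show "integrable (eta \<rho> p x0 n) (\<lambda>x. (x - x0)\<^sup>2)"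
    unfolding eta_integrable[OF assms(3) square_measurable] weighted
    by (simp add: kernel_moment_integral(1)[OF assms(1,2)])
  show "integral\<^sup>L (eta \<rho> p x0 n) (\<lambda>x. (x - x0)\<^sup>2)
       = (a (n+1))\<^sup>2 * ((poly (p n) x0)\<^sup>2 + (poly (p (n+1)) x0)\<^sup>2) / (\<Sum>j\<le>n. (poly (p j) x0)\<^sup>2)"
    unfolding eta_integral[OF assms(3) square_measurable] weighted
    by (simp add: kernel_moment_integral(2)[OF assms(1,2)] CD_kernel_diagonal)
qed

(* A finite Borel measure on R is concentrated on its support: the complement of the
   support is covered by countably many null balls with rational centre and radius. *)
lemma AE_in_msupport:
  assumes "finite_measure \<rho>" "sets \<rho> = sets borel"
  shows "AE x in \<rho>. x \<in> msupport \<rho>"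
proof -
  interpret finite_measure \<rho> by (rule assms(1))
  define null_ball where "null_ball q = (if 0 < snd q \<and> measure \<rho> (ball (real_of_rat (fst q)) (real_of_rat (snd q))) = 0
      then ball (real_of_rat (fst q)) (real_of_rat (snd q)) else {})" for q :: "rat \<times> rat"
  have "null_ball q \<in> null_sets \<rho>" for q
    using assms(2) by (auto simp: null_ball_def null_sets_def emeasure_eq_measure)
  then have null: "(\<Union>q. null_ball q) \<in> null_sets \<rho>" by blast
  have "{x \<in> space \<rho>. x \<notin> msupport \<rho>} \<subseteq> (\<Union>q. null_ball q)"
  proof
    fix x assume "x \<in> {x \<in> space \<rho>. x \<notin> msupport \<rho>}"
    then obtain e where e: "e > 0" "\<not> measure \<rho> (ball x e) > 0"
      unfolding msupport_def by auto
    obtain q where q: "q \<in> \<rat>" "x < q" "q < x + e/3"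
      using Rats_dense_in_real[of x "x + e/3"] e by auto
    obtain r where r: "r \<in> \<rat>" "e/3 < r" "r < 2*e/3"
      using Rats_dense_in_real[of "e/3" "2*e/3"] e by auto
    obtain q' r' where q': "q = real_of_rat q'" and r': "r = real_of_rat r'"
      using q(1) r(1) Rats_cases by metis
    have "ball q r \<subseteq> ball x e" using q r by (auto simp: dist_real_def)
    then have "measure \<rho> (ball q r) \<le> measure \<rho> (ball x e)"
      by (rule finite_measure_mono) (use assms(2) in simp)
    then have "measure \<rho> (ball q r) = 0"
      using e(2) measure_nonneg[of \<rho> "ball q r"] by linarith
    moreover have "0 < real_of_rat r'" using r(2) r' e(1) by linarith
    then have "0 < r'" by simp
    ultimately have "x \<in> null_ball (q', r')"
      unfolding null_ball_def using q r q' r' by (simp add: dist_real_def)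
    then show "x \<in> (\<Union>q. null_ball q)" by blast
  qed
  then show ?thesis by (rule AE_I'[OF null])
qed

lemma admissible_AE_bounded:
  assumes "admissible_measure \<rho>"
  obtains R where "AE x in \<rho>. \<bar>x - x0\<bar> \<le> R"
proof -
  have "prob_space \<rho>" "sets \<rho> = sets borel" "compact (msupport \<rho>)"
    using assms unfolding admissible_measure_def by auto
  then have AE: "AE x in \<rho>. x \<in> msupport \<rho>"
    by (intro AE_in_msupport) (simp_all add: prob_space_def)
  obtain B where B: "\<And>x. x \<in> msupport \<rho> \<Longrightarrow> \<bar>x\<bar> \<le> B"
    using compact_imp_bounded[OF \<open>compact (msupport \<rho>)\<close>] unfolding bounded_iff by auto
  have "AE x in \<rho>. \<bar>x - x0\<bar> \<le> B + \<bar>x0\<bar>"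
    using AE by (rule eventually_mono) (use B in force)
  then show ?thesis by (rule that)
qed

lemma continuous_quadratic_majorant:
  fixes f :: "real \<Rightarrow> real"
  assumes "isCont f x0" "\<And>x. \<bar>f x\<bar> \<le> M" "0 < \<epsilon>"
  obtains B where "\<And>x. \<bar>f x - f x0\<bar> \<le> \<epsilon> + B * (x - x0)\<^sup>2"
proof -
  obtain \<delta> where \<delta>: "\<delta> > 0" "\<And>x. \<bar>x - x0\<bar> < \<delta> \<Longrightarrow> \<bar>f x - f x0\<bar> < \<epsilon>"
    using assms(1,3) unfolding continuous_at_eps_delta dist_real_def by blast
  define B where "B = 2 * M / \<delta>\<^sup>2"
  have "0 \<le> M" using assms(2)[of x0] by linarith
  then have B_nonneg: "0 \<le> B" unfolding B_def by simp
  have "\<bar>f x - f x0\<bar> \<le> \<epsilon> + B * (x - x0)\<^sup>2" for x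
  proof (cases "\<bar>x - x0\<bar> < \<delta>")
    case True
    then show ?thesis using \<delta>(2)[OF True] B_nonneg by (simp add: add_increasing2)
  next
    case False
    then have "\<delta>\<^sup>2 \<le> (x - x0)\<^sup>2"
      using \<delta>(1) power_mono[of \<delta> "\<bar>x - x0\<bar>" 2] by simp
    then have "2 * M \<le> B * (x - x0)\<^sup>2"
      using B_nonneg mult_left_mono[of "\<delta>\<^sup>2" "(x - x0)\<^sup>2" B] \<delta>(1) by (simp add: B_def)
    moreover have "\<bar>f x - f x0\<bar> \<le> 2 * M" using assms(2)[of x] assms(2)[of x0] by linarith
    ultimately show ?thesis using assms(3) by linarith
  qed
  then show ?thesis by (rule that)
qed

lemma integral_return_borel:
  fixes h :: "real \<Rightarrow> real"
  assumes "h \<in> borel_measurable borel"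
  shows "integral\<^sup>L (return borel x0) h = h x0"
  by (rule integral_return) (simp_all add: assms)

lemma weak_conv_delta_if_second_moment_vanishes:
  fixes \<mu> :: "nat \<Rightarrow> real measure"
  assumes prob: "\<And>n. prob_space (\<mu> n)" and sets: "\<And>n. sets (\<mu> n) = sets borel"
    and moment_integrable: "\<And>n. integrable (\<mu> n) (\<lambda>x. (x - x0)\<^sup>2)"
    and moment_lim: "(\<lambda>n. integral\<^sup>L (\<mu> n) (\<lambda>x. (x - x0)\<^sup>2)) \<longlonglongrightarrow> 0"
  shows "weak_conv_to \<mu> (return borel x0)"
  unfolding weak_conv_to_def
proof (intro allI impI)
  fix f :: "real \<Rightarrow> real" assume "continuous_on UNIV f \<and> bounded (range f)"
  then have cont: "continuous_on UNIV f" and "bounded (range f)" by auto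
  then obtain M where M: "\<And>x. \<bar>f x\<bar> \<le> M" unfolding bounded_iff by auto
  have f_meas: "f \<in> borel_measurable borel" by (rule borel_measurable_continuous_onI[OF cont])
  have deviation: "\<bar>integral\<^sup>L (\<mu> n) f - f x0\<bar> \<le> \<epsilon> + B * integral\<^sup>L (\<mu> n) (\<lambda>x. (x - x0)\<^sup>2)"
    if majorant: "\<And>x. \<bar>f x - f x0\<bar> \<le> \<epsilon> + B * (x - x0)\<^sup>2" for n \<epsilon> B
  proof -
    interpret prob_space "\<mu> n" by (rule prob)
    have meas: "f \<in> borel_measurable (\<mu> n)"
      using f_meas by (simp add: measurable_cong_sets[OF sets refl])
    have "integrable (\<mu> n) f"
      by (rule integrable_const_bound[where B = M]) (use M meas in auto)
    then have "integral\<^sup>L (\<mu> n) f - f x0 = integral\<^sup>L (\<mu> n) (\<lambda>x. f x - f x0)"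
      by (simp add: prob_space)
    also have "\<bar>\<dots>\<bar> \<le> integral\<^sup>L (\<mu> n) (\<lambda>x. \<epsilon> + B * (x - x0)\<^sup>2)"
      using \<open>integrable (\<mu> n) f\<close> moment_integrable[of n] majorant
      by (intro integral_abs_bound_integral) auto
    also have "\<dots> = \<epsilon> + B * integral\<^sup>L (\<mu> n) (\<lambda>x. (x - x0)\<^sup>2)"
      using moment_integrable[of n] by (simp add: prob_space)
    finally show ?thesis .
  qed
  show "(\<lambda>n. integral\<^sup>L (\<mu> n) f) \<longlonglongrightarrow> integral\<^sup>L (return borel x0) f"
    unfolding integral_return_borel[OF f_meas]
  proof (rule LIMSEQ_I)
    fix r :: real assume "0 < r"
    have "isCont f x0" using cont by (simp add: continuous_on_eq_continuous_at)
    then obtain B where B: "\<And>x. \<bar>f x - f x0\<bar> \<le> r/2 + B * (x - x0)\<^sup>2"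
      using continuous_quadratic_majorant[OF \<open>isCont f x0\<close> M half_gt_zero[OF \<open>0 < r\<close>]] by blast
    have "(\<lambda>n. B * integral\<^sup>L (\<mu> n) (\<lambda>x. (x - x0)\<^sup>2)) \<longlonglongrightarrow> B * 0"
      by (intro tendsto_intros moment_lim)
    then obtain N where N: "\<And>n. n \<ge> N \<Longrightarrow> \<bar>B * integral\<^sup>L (\<mu> n) (\<lambda>x. (x - x0)\<^sup>2)\<bar> < r/2"
      using LIMSEQ_D[OF _ half_gt_zero[OF \<open>0 < r\<close>]] by fastforce
    have "\<bar>integral\<^sup>L (\<mu> n) f - f x0\<bar> < r" if "n \<ge> N" for n
      using deviation[OF B, of n] N[OF that] abs_ge_self[of "B * integral\<^sup>L (\<mu> n) (\<lambda>x. (x - x0)\<^sup>2)"]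
      by linarith
    then show "\<exists>N. \<forall>n\<ge>N. norm (integral\<^sup>L (\<mu> n) f - f x0) < r" by auto
  qed
qed

(* Conversely, for measures concentrated on a common bounded set, weak convergence to the
   Dirac measure at x0 implies vanishing second moments (test with a truncated square). *)
lemma second_moment_vanishes_if_weak_conv_delta:
  fixes \<mu> :: "nat \<Rightarrow> real measure"
  assumes sets: "\<And>n. sets (\<mu> n) = sets borel"
    and bounded: "\<And>n. AE x in \<mu> n. \<bar>x - x0\<bar> \<le> R"
    and weak: "weak_conv_to \<mu> (return borel x0)"
  shows "(\<lambda>n. integral\<^sup>L (\<mu> n) (\<lambda>x. (x - x0)\<^sup>2)) \<longlonglongrightarrow> 0"
proof -
  define g where "g x = min ((x - x0)\<^sup>2) (R\<^sup>2)" for x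
  have g_cont: "continuous_on UNIV g" unfolding g_def[abs_def] by (intro continuous_intros)
  have "bounded (range g)"
    unfolding bounded_iff g_def by (intro exI[of _ "R\<^sup>2"]) auto
  then have "(\<lambda>n. integral\<^sup>L (\<mu> n) g) \<longlonglongrightarrow> integral\<^sup>L (return borel x0) g"
    using weak g_cont unfolding weak_conv_to_def by blast
  moreover have "integral\<^sup>L (return borel x0) g = 0"
    by (simp add: integral_return_borel[OF borel_measurable_continuous_onI[OF g_cont]] g_def)
  moreover have "integral\<^sup>L (\<mu> n) g = integral\<^sup>L (\<mu> n) (\<lambda>x. (x - x0)\<^sup>2)" for n
  proof (rule integral_cong_AE)
    show "g \<in> borel_measurable (\<mu> n)" "(\<lambda>x. (x - x0)\<^sup>2) \<in> borel_measurable (\<mu> n)"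
      unfolding measurable_cong_sets[OF sets refl] g_def
      by (intro borel_measurable_continuous_onI continuous_intros)+
    show "AE x in \<mu> n. g x = (x - x0)\<^sup>2"
      using bounded[of n] by (rule eventually_mono)
        (use power_mono[of "\<bar>_ - x0\<bar>" R 2] in \<open>auto simp: g_def\<close>)
  qed
  ultimately show ?thesis by simp
qed


(* For v >= 0 with v_0 > 0 and partial sums S_n, and weights A_n bounded above and away
   from zero: A_n (v_n + v_(n+1)) / S_n -> 0 iff v_n / S_n -> 0.  The backward direction
   uses v_(n+1) / S_n = r_(n+1) / (1 - r_(n+1)) for r_n = v_n / S_n. *)
lemma neighbour_ratio_tendsto_zero_iff:
  fixes A v :: "nat \<Rightarrow> real"
  assumes v_nonneg: "\<And>n. 0 \<le> v n" and v0: "0 < v 0" and c: "0 < c"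
    and A_lower: "\<And>n. c \<le> A n" and A_upper: "\<And>n. A n \<le> D"
  shows "(\<lambda>n. A n * (v n + v (Suc n)) / (\<Sum>j\<le>n. v j)) \<longlonglongrightarrow> 0 \<longleftrightarrow>
         (\<lambda>n. v n / (\<Sum>j\<le>n. v j)) \<longlonglongrightarrow> 0"
proof -
  define S where "S n = (\<Sum>j\<le>n. v j)" for n
  define r where "r n = v n / S n" for n
  define t where "t n = r n + v (Suc n) / S n" for n
  have S_pos: "0 < S n" for n
    using v0 member_le_sum[of 0 "{..n}" v] v_nonneg unfolding S_def by force
  have r_nonneg: "0 \<le> r n" for n
    unfolding r_def using S_pos[of n] v_nonneg[of n] by simp
  have t_nonneg: "0 \<le> t n" for n
    unfolding t_def using r_nonneg[of n] S_pos[of n] v_nonneg[of "Suc n"] by simp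
  have split: "A n * (v n + v (Suc n)) / S n = A n * t n" for n
    unfolding t_def r_def by (simp add: add_divide_distrib distrib_left)
  have next_term: "v (Suc n) / S n = r (Suc n) / (1 - r (Suc n))" for n
  proof -
    have "S n = S (Suc n) * (1 - r (Suc n))"
      using S_pos[of "Suc n"] unfolding r_def S_def by (simp add: field_simps)
    then show ?thesis unfolding r_def by simp
  qed
  show ?thesis unfolding S_def[symmetric] split r_def[symmetric]
  proof
    assume "(\<lambda>n. A n * t n) \<longlonglongrightarrow> 0"
    then have lim: "(\<lambda>n. A n * t n / c) \<longlonglongrightarrow> 0" by (simp add: tendsto_divide_zero)
    have bound: "r n \<le> A n * t n / c" for n
    proof -
      have "c * r n \<le> A n * t n"
        using mult_mono[OF A_lower[of n], of "r n" "t n"] A_lower[of n] c r_nonneg[of n] t_nonneg[of n]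
        unfolding t_def by (simp add: S_pos less_imp_le v_nonneg)
      then show ?thesis using c by (simp add: field_simps)
    qed
    show "r \<longlonglongrightarrow> 0"
      by (rule tendsto_sandwich[OF _ _ tendsto_const lim]) (simp_all add: r_nonneg bound)
  next
    assume "r \<longlonglongrightarrow> 0"
    then have "(\<lambda>n. r (Suc n) / (1 - r (Suc n))) \<longlonglongrightarrow> 0 / (1 - 0)"
      by (intro tendsto_intros LIMSEQ_Suc) simp_all
    then have "t \<longlonglongrightarrow> 0 + 0"
      unfolding t_def next_term by (intro tendsto_intros \<open>r \<longlonglongrightarrow> 0\<close>) simp
    then have lim: "(\<lambda>n. D * t n) \<longlonglongrightarrow> 0" by (simp add: tendsto_mult_right_zero)
    have "0 \<le> A n * t n" "A n * t n \<le> D * t n" for n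
      using A_lower[of n] A_upper[of n] c t_nonneg[of n] by (simp_all add: mult_right_mono)
    then show "(\<lambda>n. A n * t n) \<longlonglongrightarrow> 0"
      by (intro tendsto_sandwich[OF _ _ tendsto_const lim]) simp_all
  qed
qed


theorem theorem2p2:
  fixes \<rho> :: "real measure" and p :: "nat \<Rightarrow> real poly" and a b :: "nat \<Rightarrow> real" and x0 :: real
  assumes "admissible_measure \<rho>"
    and "orthonormal_polys \<rho> p"
    and "jacobi_params p a b"
    and "\<exists>c>0. \<forall>n\<ge>1. c \<le> a n"
    and "\<exists>C. \<forall>n\<ge>1. a n \<le> C"
  shows "(nevai_condition \<rho> p x0 \<longleftrightarrow>
            (\<lambda>n. integral\<^sup>L (eta \<rho> p x0 n) (\<lambda>x. (x - x0)\<^sup>2)) \<longlonglongrightarrow> 0) \<and>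
         ((\<lambda>n. integral\<^sup>L (eta \<rho> p x0 n) (\<lambda>x. (x - x0)\<^sup>2)) \<longlonglongrightarrow> 0 \<longleftrightarrow>
            (\<lambda>n. (poly (p n) x0)\<^sup>2 / (\<Sum>j\<le>n. (poly (p j) x0)\<^sup>2)) \<longlonglongrightarrow> 0)"
proof -
  have sets: "sets \<rho> = sets borel"
    using assms(1) unfolding admissible_measure_def by auto
  obtain c where c: "c > 0" "\<And>n. n \<ge> 1 \<Longrightarrow> c \<le> a n" using assms(4) by auto
  obtain C where C: "\<And>n. n \<ge> 1 \<Longrightarrow> a n \<le> C" using assms(5) by auto
  obtain R where R: "AE x in \<rho>. \<bar>x - x0\<bar> \<le> R" using admissible_AE_bounded[OF assms(1)] .
  have nevai_iff_moment: "nevai_condition \<rho> p x0 \<longleftrightarrow>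
      (\<lambda>n. integral\<^sup>L (eta \<rho> p x0 n) (\<lambda>x. (x - x0)\<^sup>2)) \<longlonglongrightarrow> 0"
    unfolding nevai_condition_def
    using weak_conv_delta_if_second_moment_vanishes[OF eta_prob_space[OF assms(2) sets] _
        eta_second_moment(1)[OF assms(2,3) sets]]
      second_moment_vanishes_if_weak_conv_delta[OF _ AE_eta[OF sets R]]
    by (auto simp: sets_eta sets)
  have "(\<lambda>n. integral\<^sup>L (eta \<rho> p x0 n) (\<lambda>x. (x - x0)\<^sup>2)) \<longlonglongrightarrow> 0 \<longleftrightarrow>
      (\<lambda>n. (poly (p n) x0)\<^sup>2 / (\<Sum>j\<le>n. (poly (p j) x0)\<^sup>2)) \<longlonglongrightarrow> 0"
    unfolding eta_second_moment(2)[OF assms(2,3) sets] Suc_eq_plus1[symmetric]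
    by (rule neighbour_ratio_tendsto_zero_iff[where c = "c\<^sup>2" and D = "C\<^sup>2"])
      (use c C orthonormal_first_poly_pos[OF assms(2), of x0] in
        \<open>auto intro!: power_mono intro: order.trans[OF less_imp_le[OF c(1)]]\<close>)
  with nevai_iff_moment show ?thesis by simp
qed

end
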